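(* If a graph $G$ is $M$-fat $n$-bottlenecked for some $M,n\in\mathbb N$, then the natural map $f:G\to G_{M,M}$ (for any root $x_0$) is a quasi-isometry.
   Context: All graphs are connected (and unbounded); multi-edges are allowed; $d$ is the graph metric on vertices. Sets $X,Y$ are $M$-disjoint if $d(x,y)>M$ for all $x\in X,y\in Y$; $X$ is $M$-connected if any two of its points are joined by a finite sequence in $X$ with consecutive distances $\le M$; $N_M(S)=\{y:d(s,y)<M\text{ for some }s\in S\}$. $G$ is $M$-fat $n$-bottlenecked if for any two connected $M$-disjoint subgraphs $X,Y\subset G$ there is $S\subset V(G)\setminus(V(X)\cup V(Y))$ with $|S|=n$ such that every path from a vertex of $X$ to a vertex of $Y$ meets $N_M(S)$. Skeleton $G_{\lambda,k}$ (root $x_0\in V(G)$, scale $\lambda\ge1$, connectivity $k\ge1$): layers $A_{N,\lambda}=\{x: N\lambda<d(x,x_0)\le(N+1)\lambda\}$, $N\in\mathbb Z$; blocks are the maximal $k$-connected subsets of layers; $G_{\lambda,k}$ has a vertex per block and an edge between two blocks iff an edge of $G$ joins a vertex of one to a vertex of the other. The natural map $f$ sends each vertex of $G$ to (the vertex corresponding to) its block. A map $f$ is a quasi-isometry if there are $a\ge1,b\ge0$ with $\frac1a d(x,y)-b\le d(f(x),f(y))\le a d(x,y)+b$ (and a quasi-isometric embedding in the other direction exists). *)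

theory Defs
  imports Complex_Main
begin

(* A graph is given by a vertex set V and a symmetric edge relation E \<subseteq> V \<times> V.
   Multi-edges do not affect the metric or the skeleton, so they are not recorded. *)

definition is_walk :: "('a \<times> 'a) set \<Rightarrow> 'a list \<Rightarrow> bool" where
  "is_walk E xs \<longleftrightarrow> xs \<noteq> [] \<and> successively (\<lambda>u v. (u, v) \<in> E) xs"

definition is_path :: "('a \<times> 'a) set \<Rightarrow> 'a list \<Rightarrow> bool" where
  "is_path E xs \<longleftrightarrow> is_walk E xs \<and> distinct xs"

definition gdist :: "('a \<times> 'a) set \<Rightarrow> 'a \<Rightarrow> 'a \<Rightarrow> nat" where
  "gdist E x y = (LEAST n. \<exists>xs. is_walk E xs \<and> hd xs = x \<and> last xs = y \<and> length xs = Suc n)"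

definition connected_graph :: "'a set \<Rightarrow> ('a \<times> 'a) set \<Rightarrow> bool" where
  "connected_graph V E \<longleftrightarrow> V \<noteq> {} \<and>
     (\<forall>x\<in>V. \<forall>y\<in>V. \<exists>xs. is_walk E xs \<and> hd xs = x \<and> last xs = y)"

definition graph :: "'a set \<Rightarrow> ('a \<times> 'a) set \<Rightarrow> bool" where
  "graph V E \<longleftrightarrow> E \<subseteq> V \<times> V \<and> sym E \<and> connected_graph V E \<and>
     (\<forall>r::nat. \<exists>x\<in>V. \<exists>y\<in>V. gdist E x y > r)"

definition subgraph :: "'a set \<Rightarrow> ('a \<times> 'a) set \<Rightarrow> 'a set \<Rightarrow> ('a \<times> 'a) set \<Rightarrow> bool" where
  "subgraph V' E' V E \<longleftrightarrow> V' \<subseteq> V \<and> E' \<subseteq> E \<and> E' \<subseteq> V' \<times> V'"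

definition M_disjoint :: "('a \<times> 'a) set \<Rightarrow> nat \<Rightarrow> 'a set \<Rightarrow> 'a set \<Rightarrow> bool" where
  "M_disjoint E M X Y \<longleftrightarrow> (\<forall>x\<in>X. \<forall>y\<in>Y. gdist E x y > M)"

definition nbhd :: "'a set \<Rightarrow> ('a \<times> 'a) set \<Rightarrow> nat \<Rightarrow> 'a set \<Rightarrow> 'a set" where
  "nbhd V E M S = {y\<in>V. \<exists>s\<in>S. gdist E s y < M}"

definition fat_bottlenecked :: "'a set \<Rightarrow> ('a \<times> 'a) set \<Rightarrow> nat \<Rightarrow> nat \<Rightarrow> bool" where
  "fat_bottlenecked V E M n \<longleftrightarrow>
    (\<forall>VX EdX VY EdY. subgraph VX EdX V E \<and> connected_graph VX EdX \<and>
                    subgraph VY EdY V E \<and> connected_graph VY EdY \<and> M_disjoint E M VX VY \<longrightarrow>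
       (\<exists>S. S \<subseteq> V - (VX \<union> VY) \<and> finite S \<and> card S = n \<and>
            (\<forall>xs. is_path E xs \<and> hd xs \<in> VX \<and> last xs \<in> VY \<longrightarrow>
                  (\<exists>v\<in>set xs. v \<in> nbhd V E M S))))"

definition layer :: "'a set \<Rightarrow> ('a \<times> 'a) set \<Rightarrow> 'a \<Rightarrow> nat \<Rightarrow> int \<Rightarrow> 'a set" where
  "layer V E x0 lam N = {x\<in>V. N * int lam < int (gdist E x x0) \<and> int (gdist E x x0) \<le> (N + 1) * int lam}"

definition k_connected :: "('a \<times> 'a) set \<Rightarrow> nat \<Rightarrow> 'a set \<Rightarrow> bool" where
  "k_connected E k X \<longleftrightarrow> (\<forall>x\<in>X. \<forall>y\<in>X. \<exists>xs. xs \<noteq> [] \<and> hd xs = x \<and> last xs = y \<and>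
      set xs \<subseteq> X \<and> successively (\<lambda>u v. gdist E u v \<le> k) xs)"

definition is_block :: "'a set \<Rightarrow> ('a \<times> 'a) set \<Rightarrow> 'a \<Rightarrow> nat \<Rightarrow> nat \<Rightarrow> 'a set \<Rightarrow> bool" where
  "is_block V E x0 lam k B \<longleftrightarrow> (\<exists>N. B \<noteq> {} \<and> B \<subseteq> layer V E x0 lam N \<and> k_connected E k B \<and>
      (\<forall>C. B \<subseteq> C \<and> C \<subseteq> layer V E x0 lam N \<and> k_connected E k C \<longrightarrow> C = B))"

definition skel_V :: "'a set \<Rightarrow> ('a \<times> 'a) set \<Rightarrow> 'a \<Rightarrow> nat \<Rightarrow> nat \<Rightarrow> 'a set set" where
  "skel_V V E x0 lam k = {B. is_block V E x0 lam k B}"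

definition skel_E :: "'a set \<Rightarrow> ('a \<times> 'a) set \<Rightarrow> 'a \<Rightarrow> nat \<Rightarrow> nat \<Rightarrow> ('a set \<times> 'a set) set" where
  "skel_E V E x0 lam k = {(B, C). B \<in> skel_V V E x0 lam k \<and> C \<in> skel_V V E x0 lam k \<and>
      (\<exists>x\<in>B. \<exists>y\<in>C. (x, y) \<in> E)}"

definition skel_map :: "'a set \<Rightarrow> ('a \<times> 'a) set \<Rightarrow> 'a \<Rightarrow> nat \<Rightarrow> nat \<Rightarrow> 'a \<Rightarrow> 'a set" where
  "skel_map V E x0 lam k x = (THE B. is_block V E x0 lam k B \<and> x \<in> B)"

definition qi_embedding ::
  "'a set \<Rightarrow> ('a \<times> 'a) set \<Rightarrow> 'b set \<Rightarrow> ('b \<times> 'b) set \<Rightarrow> ('a \<Rightarrow> 'b) \<Rightarrow> bool" where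
  "qi_embedding VA EA VB EB f \<longleftrightarrow> f ` VA \<subseteq> VB \<and>
     (\<exists>a b::real. a \<ge> 1 \<and> b \<ge> 0 \<and> (\<forall>x\<in>VA. \<forall>y\<in>VA.
        real (gdist EA x y) / a - b \<le> real (gdist EB (f x) (f y)) \<and>
        real (gdist EB (f x) (f y)) \<le> a * real (gdist EA x y) + b))"

definition quasi_isometry ::
  "'a set \<Rightarrow> ('a \<times> 'a) set \<Rightarrow> 'b set \<Rightarrow> ('b \<times> 'b) set \<Rightarrow> ('a \<Rightarrow> 'b) \<Rightarrow> bool" where
  "quasi_isometry VA EA VB EB f \<longleftrightarrow> qi_embedding VA EA VB EB f \<and>
     (\<exists>g. qi_embedding VB EB VA EA g)"

end

theory Submission
  imports Defs
begin

(* A block lies in one layer; if that is layer N \<ge> 2, its points satisfy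
   a + 2M < d(\<cdot>, x0) \<le> a + 3M with a = (N - 2)M.  Were two of them 9Mn apart, an M-chain in
   the block joining them would contain n + 1 points pairwise more than 8M apart, all in one
   component Y of {a + M < d(\<cdot>, x0)}.  The ball X of radius a about x0 is connected and
   M-disjoint from Y, so some set S of n points has every path from X to Y meeting N_M(S).
   A geodesic from each of the n + 1 points down to X has length at most 3M, so each of them lies
   within 4M of S, and by pigeonhole two of them are within 8M of each other: a contradiction.
   So blocks have diameter at most D = 9Mn + 4M.  The natural map is 1-Lipschitz, and consecutive
   blocks of a skeleton path are joined by an edge, so d(x, y) \<le> (D + 1) d(f x, f y) + D; choosing
   a point in each block gives the quasi-inverse. *)

section \<open>Walks and the graph metric\<close>

definition reachable :: "('a \<times> 'a) set \<Rightarrow> 'a \<Rightarrow> 'a \<Rightarrow> bool" where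
  "reachable E x y \<longleftrightarrow> (\<exists>xs. is_walk E xs \<and> hd xs = x \<and> last xs = y)"

lemma is_walk_take:
  assumes "is_walk E xs" "i < length xs"
  shows "is_walk E (take (Suc i) xs)" "hd (take (Suc i) xs) = hd xs" "last (take (Suc i) xs) = xs ! i"
  using assms by (auto simp: is_walk_def successively_conv_nth) (simp add: take_Suc_conv_app_nth)

lemma is_walk_drop:
  assumes "is_walk E xs" "i < length xs"
  shows "is_walk E (drop i xs)" "hd (drop i xs) = xs ! i" "last (drop i xs) = last xs"
  using assms by (auto simp: is_walk_def successively_conv_nth hd_drop_conv_nth)

lemma is_walk_append:
  assumes "is_walk E xs" "is_walk E ys" "last xs = hd ys"
  shows "is_walk E (xs @ tl ys)" "hd (xs @ tl ys) = hd xs" "last (xs @ tl ys) = last ys"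
    "length (xs @ tl ys) = length xs + length ys - 1"
proof -
  obtain y ys' where ys: "ys = y # ys'"
    using assms(2) by (cases ys) (auto simp: is_walk_def)
  have "xs \<noteq> []"
    using assms(1) by (simp add: is_walk_def)
  with assms ys show "is_walk E (xs @ tl ys)" "hd (xs @ tl ys) = hd xs" "last (xs @ tl ys) = last ys"
    "length (xs @ tl ys) = length xs + length ys - 1"
    by (auto simp: is_walk_def successively_append_iff successively_Cons last_append)
qed

lemma is_walk_rev: "sym E \<Longrightarrow> is_walk E xs \<Longrightarrow> is_walk E (rev xs)"
  unfolding is_walk_def by (auto intro: successively_mono simp: sym_def)

lemma is_walk_restrict: "is_walk E xs \<Longrightarrow> set xs \<subseteq> U \<Longrightarrow> is_walk (E \<inter> U \<times> U) xs"
  unfolding is_walk_def by (auto intro: successively_mono)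

lemma is_walk_restrict_set:
  assumes "is_walk (E \<inter> U \<times> U) xs" "hd xs \<in> U"
  shows "set xs \<subseteq> U"
proof -
  have "successively (\<lambda>u v. (u, v) \<in> E \<inter> U \<times> U) xs" "xs \<noteq> []"
    using assms(1) by (auto simp: is_walk_def)
  then show ?thesis
    using assms(2) by (induction xs rule: induct_list012) auto
qed

lemma reachable_refl: "reachable E x x"
  unfolding reachable_def is_walk_def by (rule exI[of _ "[x]"]) simp

lemma reachable_trans: "reachable E x y \<Longrightarrow> reachable E y z \<Longrightarrow> reachable E x z"
  unfolding reachable_def by (metis is_walk_append(1-3))

lemma reachable_sym: "sym E \<Longrightarrow> reachable E x y \<Longrightarrow> reachable E y x"
  unfolding reachable_def by (metis is_walk_rev hd_rev last_rev)

lemma gdist_le_walk: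
  assumes "is_walk E xs" "hd xs = x" "last xs = y"
  shows "gdist E x y \<le> length xs - 1"
proof -
  have "length xs = Suc (length xs - 1)"
    using assms(1) by (cases xs) (auto simp: is_walk_def)
  then show ?thesis
    unfolding gdist_def using assms by (intro Least_le) metis
qed

lemma shortest_walk_exists:
  assumes "reachable E x y"
  obtains xs where "is_walk E xs" "hd xs = x" "last xs = y" "length xs = Suc (gdist E x y)"
proof -
  obtain xs where xs: "is_walk E xs" "hd xs = x" "last xs = y"
    using assms unfolding reachable_def by auto
  then have "length xs = Suc (length xs - 1)"
    by (cases xs) (auto simp: is_walk_def)
  with xs have "\<exists>n xs. is_walk E xs \<and> hd xs = x \<and> last xs = y \<and> length xs = Suc n"
    by metis
  then have "\<exists>xs. is_walk E xs \<and> hd xs = x \<and> last xs = y \<and> length xs = Suc (gdist E x y)"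
    unfolding gdist_def by (rule LeastI_ex)
  then show ?thesis
    using that by blast
qed

lemma gdist_self [simp]: "gdist E x x = 0"
  using gdist_le_walk[of E "[x]" x x] by (simp add: is_walk_def)

lemma gdist_edge: "(u, v) \<in> E \<Longrightarrow> gdist E u v \<le> 1"
  using gdist_le_walk[of E "[u, v]" u v] by (simp add: is_walk_def)

lemma gdist_triangle:
  assumes "reachable E x y" "reachable E y z"
  shows "gdist E x z \<le> gdist E x y + gdist E y z"
proof -
  obtain xs where xs: "is_walk E xs" "hd xs = x" "last xs = y" "length xs = Suc (gdist E x y)"
    using assms(1) by (rule shortest_walk_exists)
  obtain ys where ys: "is_walk E ys" "hd ys = y" "last ys = z" "length ys = Suc (gdist E y z)"
    using assms(2) by (rule shortest_walk_exists)
  have "gdist E x z \<le> length (xs @ tl ys) - 1"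
    using xs ys by (intro gdist_le_walk is_walk_append) (simp_all add: is_walk_append)
  then show ?thesis
    using xs ys by simp
qed

lemma gdist_commute:
  assumes "sym E" "reachable E x y"
  shows "gdist E x y = gdist E y x"
proof -
  have le: "gdist E a b \<le> gdist E b a" if ba: "reachable E b a" for a b
  proof -
    obtain xs where "is_walk E xs" "hd xs = b" "last xs = a" "length xs = Suc (gdist E b a)"
      using ba by (rule shortest_walk_exists)
    with is_walk_rev[OF assms(1)] show ?thesis
      using gdist_le_walk[of E "rev xs" a b] by (simp add: hd_rev last_rev)
  qed
  show ?thesis
    using le[of x y] le[of y x] assms reachable_sym by (metis antisym)
qed

lemma shortest_walk_nth:
  assumes "is_walk E ws" "hd ws = a" "last ws = b" "length ws = Suc (gdist E a b)" "j < length ws"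
  shows "reachable E a (ws ! j)" "reachable E (ws ! j) b"
    "gdist E a (ws ! j) \<le> j" "gdist E (ws ! j) b = gdist E a b - j"
proof -
  note take = is_walk_take[OF assms(1,5)] and drop = is_walk_drop[OF assms(1,5)]
  show r1: "reachable E a (ws ! j)" "reachable E (ws ! j) b"
    using take drop assms unfolding reachable_def by metis+
  show "gdist E a (ws ! j) \<le> j"
    using gdist_le_walk[OF take(1)] take assms by simp
  moreover have "gdist E (ws ! j) b \<le> gdist E a b - j"
    using gdist_le_walk[OF drop(1)] drop assms by simp
  moreover have "gdist E a b \<le> gdist E a (ws ! j) + gdist E (ws ! j) b"
    using gdist_triangle[OF r1] .
  ultimately show "gdist E (ws ! j) b = gdist E a b - j"
    by linarith
qed

lemma connected_graphI_center:
  assumes "sym E" "c \<in> A" "\<And>v. v \<in> A \<Longrightarrow> reachable E v c"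
  shows "connected_graph A E"
  unfolding connected_graph_def
proof (intro conjI ballI)
  fix x y assume "x \<in> A" "y \<in> A"
  then have "reachable E x y"
    using assms reachable_trans reachable_sym by metis
  then show "\<exists>xs. is_walk E xs \<and> hd xs = x \<and> last xs = y"
    unfolding reachable_def .
qed (use assms(2) in blast)

lemma connected_graph_reachable_class:
  fixes E :: "('a \<times> 'a) set" and x :: 'a
  assumes "sym E"
  defines "C \<equiv> {v. reachable E x v}"
  shows "connected_graph C (E \<inter> C \<times> C)"
proof (rule connected_graphI_center)
  show "sym (E \<inter> C \<times> C)"
    using assms(1) unfolding sym_def by blast
  show "x \<in> C"
    unfolding C_def by (simp add: reachable_refl)
  fix v assume "v \<in> C"
  then obtain ws where ws: "is_walk E ws" "hd ws = x" "last ws = v"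
    unfolding C_def reachable_def by blast
  have "set ws \<subseteq> C"
  proof
    fix z assume "z \<in> set ws"
    then obtain j where j: "j < length ws" "ws ! j = z"
      by (auto simp: in_set_conv_nth)
    have "reachable E x z"
      unfolding reachable_def using is_walk_take[OF ws(1) j(1)] ws(2) j(2)
      by (intro exI[of _ "take (Suc j) ws"]) simp
    then show "z \<in> C"
      unfolding C_def by simp
  qed
  then have "reachable (E \<inter> C \<times> C) x v"
    unfolding reachable_def using is_walk_restrict[OF ws(1)] ws(2,3) by blast
  then show "reachable (E \<inter> C \<times> C) v x"
    by (rule reachable_sym[OF \<open>sym (E \<inter> C \<times> C)\<close>])
qed

definition chain_in :: "('a \<Rightarrow> 'a \<Rightarrow> bool) \<Rightarrow> 'a set \<Rightarrow> 'a \<Rightarrow> 'a \<Rightarrow> bool" where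
  "chain_in R A x y \<longleftrightarrow>
     (\<exists>zs. zs \<noteq> [] \<and> hd zs = x \<and> last zs = y \<and> set zs \<subseteq> A \<and> successively R zs)"

lemma k_connected_iff_chain_in:
  "k_connected E k X \<longleftrightarrow> (\<forall>x\<in>X. \<forall>y\<in>X. chain_in (\<lambda>u v. gdist E u v \<le> k) X x y)"
  unfolding k_connected_def chain_in_def by blast

lemma chain_in_ends: "chain_in R A x y \<Longrightarrow> x \<in> A \<and> y \<in> A"
  unfolding chain_in_def by (metis hd_in_set last_in_set subsetD)

lemma chain_in_refl: "x \<in> A \<Longrightarrow> chain_in R A x x"
  unfolding chain_in_def by (rule exI[of _ "[x]"]) simp

lemma chain_in_trans:
  assumes "chain_in R A x y" "chain_in R A y z"
  shows "chain_in R A x z"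
proof -
  obtain xs where xs: "xs \<noteq> []" "hd xs = x" "last xs = y" "set xs \<subseteq> A" "successively R xs"
    using assms(1) unfolding chain_in_def by auto
  obtain ys where ys: "ys \<noteq> []" "hd ys = y" "last ys = z" "set ys \<subseteq> A" "successively R ys"
    using assms(2) unfolding chain_in_def by auto
  then obtain ys' where "ys = y # ys'"
    by (cases ys) auto
  with xs ys show ?thesis
    unfolding chain_in_def
    by (intro exI[of _ "xs @ ys'"]) (auto simp: successively_append_iff successively_Cons last_append)
qed

lemma chain_in_sym:
  assumes "chain_in R A x y" "\<And>u v. u \<in> A \<Longrightarrow> v \<in> A \<Longrightarrow> R u v \<Longrightarrow> R v u"
  shows "chain_in R A y x"
proof -
  obtain xs where xs: "xs \<noteq> []" "hd xs = x" "last xs = y" "set xs \<subseteq> A" "successively R xs"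
    using assms(1) unfolding chain_in_def by auto
  have "successively (\<lambda>x y. R y x) xs"
    by (rule successively_mono[OF xs(5)]) (use xs(4) assms(2) in blast)
  with xs show ?thesis
    unfolding chain_in_def by (intro exI[of _ "rev xs"]) (auto simp: hd_rev last_rev)
qed

lemma chain_in_mono: "chain_in R A x y \<Longrightarrow> A \<subseteq> A' \<Longrightarrow> chain_in R A' x y"
  unfolding chain_in_def by blast

lemma chain_in_through_reached:
  assumes "chain_in R A x y"
  shows "chain_in R {z. chain_in R A x z} x y"
proof -
  obtain zs where zs: "zs \<noteq> []" "hd zs = x" "last zs = y" "set zs \<subseteq> A" "successively R zs"
    using assms unfolding chain_in_def by auto
  have "chain_in R A x z" if "z \<in> set zs" for z
  proof -
    obtain i where i: "i < length zs" "zs ! i = z"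
      using \<open>z \<in> set zs\<close> by (auto simp: in_set_conv_nth)
    have "successively R (take (Suc i) zs)"
      using zs(5) unfolding successively_conv_nth by auto
    moreover have "set (take (Suc i) zs) \<subseteq> A"
      using zs(4) set_take_subset by fast
    moreover have "hd (take (Suc i) zs) = x"
      using zs(1,2) by simp
    moreover have "last (take (Suc i) zs) = z"
      using i by (simp add: take_Suc_conv_app_nth)
    ultimately show ?thesis
      unfolding chain_in_def using zs(1) by (intro exI[of _ "take (Suc i) zs"]) auto
  qed
  with zs show ?thesis
    unfolding chain_in_def by (intro exI[of _ zs]) auto
qed

lemma successively_stays_in:
  assumes "successively R zs" "zs \<noteq> []" "hd zs \<in> A"
    and "\<And>u v. u \<in> set zs \<Longrightarrow> v \<in> set zs \<Longrightarrow> R u v \<Longrightarrow> u \<in> A \<Longrightarrow> v \<in> A"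
  shows "set zs \<subseteq> A"
  using assms
proof (induction zs rule: induct_list012)
  case (3 x y zs)
  have "y \<in> A"
    using "3.prems"(1,3) "3.prems"(4)[of x y] by simp
  with "3.prems" have "set (y # zs) \<subseteq> A"
    by (intro "3.IH"(2)) auto
  with "3.prems"(3) show ?case
    by simp
qed auto

lemma discrete_intermediate_value:
  fixes F :: "'a \<Rightarrow> nat"
  assumes "successively (\<lambda>u v. F v \<le> F u + M) zs" "zs \<noteq> []"
    and "F (hd zs) \<le> t" "t \<le> F (last zs)" "0 < M"
  shows "\<exists>z\<in>set zs. t \<le> F z \<and> F z < t + M"
  using assms
proof (induction zs rule: induct_list012)
  case (3 x y zs)
  show ?case
  proof (cases "t \<le> F y")
    case True
    with "3.prems" show ?thesis
      by (cases "t \<le> F x") auto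
  next
    case False
    with "3.prems" "3.IH"(2) show ?thesis
      by auto
  qed
qed auto

lemma pigeonhole_common_witness:
  assumes "finite S" "card S < card K" "\<And>k. k \<in> K \<Longrightarrow> \<exists>s\<in>S. P k s"
  obtains k l s where "k \<in> K" "l \<in> K" "k \<noteq> l" "s \<in> S" "P k s" "P l s"
proof -
  obtain h where h: "\<And>k. k \<in> K \<Longrightarrow> h k \<in> S \<and> P k (h k)"
    using assms(3) by metis
  then have "card (h ` K) \<le> card S"
    by (intro card_mono[OF assms(1)]) blast
  with assms(2) have "\<not> inj_on h K"
    by (intro pigeonhole) simp
  then obtain k l where "k \<in> K" "l \<in> K" "k \<noteq> l" "h k = h l"
    unfolding inj_on_def by blast
  with h that show ?thesis
    by metis
qed

lemma mem_layer_index: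
  assumes "x \<in> V" "1 \<le> M"
  shows "x \<in> layer V E x0 M ((int (gdist E x x0) - 1) div int M)"
proof -
  define l where "l = int (gdist E x x0) - 1"
  define N where "N = l div int M"
  have "N * int M + l mod int M = l" "0 \<le> l mod int M" "l mod int M < int M"
    using assms(2) unfolding N_def by simp_all
  then have "N * int M < l + 1" "l + 1 \<le> (N + 1) * int M"
    by (simp_all add: algebra_simps)
  then show ?thesis
    using assms(1) unfolding layer_def l_def N_def by simp
qed

lemma layer_index_unique:
  assumes "x \<in> layer V E x0 M N" "x \<in> layer V E x0 M N'"
  shows "N = N'"
proof (rule ccontr)
  assume "N \<noteq> N'"
  then have "N + 1 \<le> N' \<or> N' + 1 \<le> N"
    by auto
  then have "(N + 1) * int M \<le> N' * int M \<or> (N' + 1) * int M \<le> N * int M"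
    by (auto intro: mult_right_mono)
  with assms show False
    unfolding layer_def by auto
qed

lemma layer_subset: "layer V E x0 M N \<subseteq> V"
  unfolding layer_def by blast

lemma is_blockE:
  assumes "is_block V E x0 M k B"
  obtains N where "B \<noteq> {}" "B \<subseteq> layer V E x0 M N" "k_connected E k B"
    "\<And>C. B \<subseteq> C \<Longrightarrow> C \<subseteq> layer V E x0 M N \<Longrightarrow> k_connected E k C \<Longrightarrow> C = B"
  using assms unfolding is_block_def by (elim exE conjE) (metis that)

locale graph_metric =
  fixes V :: "'a set" and E :: "('a \<times> 'a) set"
  assumes graph: "graph V E"
begin

lemma sym_E: "sym E"
  using graph unfolding graph_def by blast

lemma edge_in_V: "(u, v) \<in> E \<Longrightarrow> u \<in> V \<and> v \<in> V"
  using graph unfolding graph_def by blast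

lemma reachable_in_V: "x \<in> V \<Longrightarrow> y \<in> V \<Longrightarrow> reachable E x y"
  using graph unfolding graph_def connected_graph_def reachable_def by blast

lemma gdist_sym_V: "x \<in> V \<Longrightarrow> y \<in> V \<Longrightarrow> gdist E x y = gdist E y x"
  by (rule gdist_commute[OF sym_E reachable_in_V])

lemma gdist_triangle_V:
  "x \<in> V \<Longrightarrow> y \<in> V \<Longrightarrow> z \<in> V \<Longrightarrow> gdist E x z \<le> gdist E x y + gdist E y z"
  by (rule gdist_triangle[OF reachable_in_V reachable_in_V])

lemma walk_in_V: "is_walk E ws \<Longrightarrow> hd ws \<in> V \<Longrightarrow> set ws \<subseteq> V"
  using is_walk_restrict_set[of E V ws] graph unfolding graph_def by (simp add: Int_absorb2)

lemma shortest_walk_in_V: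
  assumes "x \<in> V" "y \<in> V"
  obtains ws where "is_walk E ws" "hd ws = x" "last ws = y" "length ws = Suc (gdist E x y)"
    "set ws \<subseteq> V"
  using shortest_walk_exists[OF reachable_in_V[OF assms]] walk_in_V assms(1) by metis

lemma geodesic_path_from_sphere:
  assumes "w \<in> V" "c \<in> V" "a \<le> gdist E w c"
  obtains P where "is_path E P" "gdist E (hd P) c = a" "hd P \<in> V" "last P = w"
    "\<And>v. v \<in> set P \<Longrightarrow> v \<in> V \<and> gdist E w v \<le> gdist E w c - a"
proof -
  obtain ws where ws: "is_walk E ws" "hd ws = w" "last ws = c" "length ws = Suc (gdist E w c)"
    and wsV: "set ws \<subseteq> V"
    using assms(1,2) by (rule shortest_walk_in_V)
  note nth = shortest_walk_nth[OF ws]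
  define j0 where "j0 = gdist E w c - a"
  define P where "P = rev (take (Suc j0) ws)"
  have j0: "j0 < length ws"
    using ws(4) unfolding j0_def by simp
  have "distinct ws"
    unfolding distinct_conv_nth
  proof (intro allI impI)
    fix i j assume "i < length ws" "j < length ws" "i \<noteq> j"
    with nth(4) ws(4) have "gdist E (ws ! i) c \<noteq> gdist E (ws ! j) c"
      by auto
    then show "ws ! i \<noteq> ws ! j"
      by auto
  qed
  then have "is_path E P"
    unfolding is_path_def P_def using is_walk_rev[OF sym_E is_walk_take(1)[OF ws(1) j0]]
    by simp
  moreover have "hd P = ws ! j0" "last P = w"
    unfolding P_def using is_walk_take[OF ws(1) j0] ws(2) by (simp_all add: hd_rev last_rev)
  moreover have "gdist E (ws ! j0) c = a"
    using nth(4)[OF j0] assms(3) unfolding j0_def by simp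
  moreover have "ws ! j0 \<in> V"
    using j0 wsV by auto
  moreover have "v \<in> V \<and> gdist E w v \<le> j0" if "v \<in> set P" for v
  proof -
    obtain j where "j < Suc j0" "j < length ws" "v = ws ! j"
      using \<open>v \<in> set P\<close> unfolding P_def by (auto simp: in_set_conv_nth)
    with nth(3)[of j] wsV show ?thesis
      by auto
  qed
  ultimately show ?thesis
    using that unfolding j0_def by auto
qed

lemma close_to_separator:
  assumes "w \<in> V" "c \<in> V" "a \<le> gdist E w c" "S \<subseteq> V"
    and separates: "\<And>P. is_path E P \<Longrightarrow> hd P \<in> {v \<in> V. gdist E v c \<le> a} \<Longrightarrow> last P = w \<Longrightarrow>
      \<exists>v\<in>set P. v \<in> nbhd V E M S"
  shows "\<exists>s\<in>S. gdist E w s < gdist E w c - a + M"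
proof -
  obtain P where P: "is_path E P" "gdist E (hd P) c = a" "hd P \<in> V" "last P = w"
    and P_near_w: "\<And>v. v \<in> set P \<Longrightarrow> v \<in> V \<and> gdist E w v \<le> gdist E w c - a"
    using assms(1-3) by (rule geodesic_path_from_sphere) (rule that)
  then obtain v where "v \<in> set P" "v \<in> nbhd V E M S"
    using separates by fastforce
  then obtain s where "s \<in> S" "gdist E s v < M"
    unfolding nbhd_def by blast
  moreover have "v \<in> V" "s \<in> V"
    using P_near_w[OF \<open>v \<in> set P\<close>] \<open>s \<in> S\<close> assms(4) by auto
  then have "gdist E w s \<le> gdist E w v + gdist E s v"
    using gdist_triangle_V[OF assms(1)] gdist_sym_V by metis
  ultimately show ?thesis
    using P_near_w[OF \<open>v \<in> set P\<close>] by force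
qed

lemma connected_graph_ball:
  fixes a :: nat
  assumes "c \<in> V"
  defines "X \<equiv> {v \<in> V. gdist E v c \<le> a}"
  shows "connected_graph X (E \<inter> X \<times> X)"
proof (rule connected_graphI_center)
  show "sym (E \<inter> X \<times> X)"
    using sym_E unfolding sym_def by blast
  show "c \<in> X"
    unfolding X_def using assms(1) by simp
  fix v assume v: "v \<in> X"
  obtain ws where ws: "is_walk E ws" "hd ws = v" "last ws = c" "length ws = Suc (gdist E v c)"
    and wsV: "set ws \<subseteq> V"
    using v assms(1) unfolding X_def by (blast elim: shortest_walk_in_V)
  have "set ws \<subseteq> X"
  proof
    fix z assume "z \<in> set ws"
    then obtain j where "j < length ws" "ws ! j = z"
      by (auto simp: in_set_conv_nth)
    with shortest_walk_nth(4)[OF ws] wsV v show "z \<in> X"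
      unfolding X_def by fastforce
  qed
  with ws show "reachable (E \<inter> X \<times> X) v c"
    unfolding reachable_def using is_walk_restrict by blast
qed

lemma spaced_points_on_chain:
  assumes "successively (\<lambda>u v. gdist E u v \<le> M) zs" "zs \<noteq> []" "set zs \<subseteq> V"
    and "c * n \<le> gdist E (hd zs) (last zs)" "0 < M"
  obtains w where "\<And>k. k \<le> n \<Longrightarrow> w k \<in> set zs"
    "\<And>k l. k \<le> n \<Longrightarrow> l \<le> n \<Longrightarrow> k \<noteq> l \<Longrightarrow> c < gdist E (w k) (w l) + M"
proof -
  let ?x = "hd zs"
  have "?x \<in> V"
    using assms(2,3) by auto
  have "successively (\<lambda>u v. gdist E ?x v \<le> gdist E ?x u + M) zs"
    using assms(1,3) gdist_triangle_V[OF \<open>?x \<in> V\<close>]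
    by (elim successively_mono) (meson add_left_mono le_trans subsetD)
  moreover have "c * k \<le> gdist E ?x (last zs)" if "k \<le> n" for k
    using mult_le_mono2[OF that] assms(4) by (rule le_trans)
  ultimately have "\<exists>z\<in>set zs. c * k \<le> gdist E ?x z \<and> gdist E ?x z < c * k + M" if "k \<le> n" for k
    using that assms(2,5) by (intro discrete_intermediate_value) auto
  then obtain w where w: "\<And>k. k \<le> n \<Longrightarrow> w k \<in> set zs"
    "\<And>k. k \<le> n \<Longrightarrow> c * k \<le> gdist E ?x (w k) \<and> gdist E ?x (w k) < c * k + M"
    by metis
  have separated: "c < gdist E (w k) (w l) + M" if "k \<le> n" "l \<le> n" "k < l" for k l
  proof -
    have "c * k + c \<le> c * l"
      using \<open>k < l\<close> by (metis add.commute mult_Suc_right mult_le_mono2 Suc_leI)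
    moreover have "gdist E ?x (w l) \<le> gdist E ?x (w k) + gdist E (w k) (w l)"
      using gdist_triangle_V[OF \<open>?x \<in> V\<close>] w(1) that assms(3) by blast
    ultimately show ?thesis
      using w(2)[OF \<open>k \<le> n\<close>] w(2)[OF \<open>l \<le> n\<close>] by linarith
  qed
  show ?thesis
  proof (rule that[OF w(1)])
    fix k l assume "k \<le> n" "l \<le> n" "k \<noteq> l"
    then consider "k < l" | "l < k"
      by linarith
    then show "c < gdist E (w k) (w l) + M"
      using separated \<open>k \<le> n\<close> \<open>l \<le> n\<close> gdist_sym_V w(1) assms(3)
      by cases (metis subsetD)+
  qed
qed

end

section \<open>The natural map onto the skeleton\<close>

lemma qi_embeddingI_nat:
  fixes C :: nat
  assumes "f ` VA \<subseteq> VB"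
    and "\<And>x y. x \<in> VA \<Longrightarrow> y \<in> VA \<Longrightarrow> gdist EB (f x) (f y) \<le> C * gdist EA x y + C"
    and "\<And>x y. x \<in> VA \<Longrightarrow> y \<in> VA \<Longrightarrow> gdist EA x y \<le> C * gdist EB (f x) (f y) + C"
  shows "qi_embedding VA EA VB EB f"
  unfolding qi_embedding_def
proof (rule conjI[OF assms(1)], rule exI[of _ "real C + 1"], rule exI[of _ "real C"],
    intro conjI ballI)
  fix x y assume xy: "x \<in> VA" "y \<in> VA"
  have "real (gdist EA x y) \<le> real C * real (gdist EB (f x) (f y)) + real C"
    using assms(3)[OF xy] by (simp flip: of_nat_mult of_nat_add)
  also have "\<dots> \<le> (real C + 1) * (real (gdist EB (f x) (f y)) + real C)"
    by (simp add: algebra_simps)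
  finally have "real (gdist EA x y) / (real C + 1) \<le> real (gdist EB (f x) (f y)) + real C"
    by (simp add: pos_divide_le_eq mult.commute add_pos_nonneg)
  then show "real (gdist EA x y) / (real C + 1) - real C \<le> real (gdist EB (f x) (f y))"
    by simp
  have "real (gdist EB (f x) (f y)) \<le> real C * real (gdist EA x y) + real C"
    using assms(2)[OF xy] by (simp flip: of_nat_mult of_nat_add)
  then show "real (gdist EB (f x) (f y)) \<le> (real C + 1) * real (gdist EA x y) + real C"
    by (simp add: algebra_simps)
qed simp_all

locale rooted_skeleton = graph_metric +
  fixes x0 :: 'a and M :: nat
  assumes root: "x0 \<in> V" and scale: "1 \<le> M"
begin

abbreviation blocks :: "'a set set" where
  "blocks \<equiv> skel_V V E x0 M M"

abbreviation block_edges :: "('a set \<times> 'a set) set" where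
  "block_edges \<equiv> skel_E V E x0 M M"

abbreviation to_block :: "'a \<Rightarrow> 'a set" where
  "to_block \<equiv> skel_map V E x0 M M"

abbreviation near :: "'a \<Rightarrow> 'a \<Rightarrow> bool" where
  "near u v \<equiv> gdist E u v \<le> M"

definition layer_index :: "'a \<Rightarrow> int" where
  "layer_index x = (int (gdist E x x0) - 1) div int M"

definition layer_component :: "'a \<Rightarrow> 'a set" where
  "layer_component x = {y. chain_in near (layer V E x0 M (layer_index x)) x y}"

lemma mem_own_layer: "x \<in> V \<Longrightarrow> x \<in> layer V E x0 M (layer_index x)"
  unfolding layer_index_def by (rule mem_layer_index[OF _ scale])

lemma layer_component_subset: "layer_component x \<subseteq> layer V E x0 M (layer_index x)"
  unfolding layer_component_def using chain_in_ends by (metis mem_Collect_eq subsetI)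

lemma layer_component_k_connected: "k_connected E M (layer_component x)"
proof (unfold k_connected_iff_chain_in, intro ballI)
  have near_sym: "near v u" if "u \<in> layer_component x" "v \<in> layer_component x" "near u v" for u v
    using that layer_component_subset layer_subset gdist_sym_V by (metis subsetD)
  have from_x: "chain_in near (layer_component x) x y" if "y \<in> layer_component x" for y
    using chain_in_through_reached that unfolding layer_component_def by fast
  fix u v assume "u \<in> layer_component x" "v \<in> layer_component x"
  have "chain_in near (layer_component x) u x"
    by (rule chain_in_sym[OF from_x[OF \<open>u \<in> layer_component x\<close>] near_sym])
  then show "chain_in near (layer_component x) u v"
    using from_x[OF \<open>v \<in> layer_component x\<close>] by (rule chain_in_trans)
qed

lemma k_connected_subset_layer_component:
  assumes "k_connected E M C" "C \<subseteq> layer V E x0 M (layer_index x)" "x \<in> C"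
  shows "C \<subseteq> layer_component x"
proof
  fix y assume "y \<in> C"
  with assms(1,3) have "chain_in near C x y"
    unfolding k_connected_iff_chain_in by blast
  then have "chain_in near (layer V E x0 M (layer_index x)) x y"
    using assms(2) by (rule chain_in_mono)
  then show "y \<in> layer_component x"
    unfolding layer_component_def by simp
qed

lemma mem_layer_component: "x \<in> V \<Longrightarrow> x \<in> layer_component x"
  unfolding layer_component_def using chain_in_refl[OF mem_own_layer] by simp

lemma layer_component_is_block:
  assumes "x \<in> V"
  shows "is_block V E x0 M M (layer_component x)"
  unfolding is_block_def
proof (intro exI[of _ "layer_index x"] conjI allI impI)
  show "layer_component x \<noteq> {}"
    using mem_layer_component[OF assms] by blast
  fix C assume C: "layer_component x \<subseteq> C \<and> C \<subseteq> layer V E x0 M (layer_index x) \<and> k_connected E M C"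
  with mem_layer_component[OF assms] have "C \<subseteq> layer_component x"
    by (intro k_connected_subset_layer_component) blast+
  with C show "C = layer_component x"
    by blast
qed (rule layer_component_subset, rule layer_component_k_connected)

lemma block_eq_layer_component:
  assumes "is_block V E x0 M M B" "x \<in> B"
  shows "B = layer_component x"
proof -
  obtain N where B: "B \<subseteq> layer V E x0 M N" "k_connected E M B"
    and maximal: "\<And>C. B \<subseteq> C \<Longrightarrow> C \<subseteq> layer V E x0 M N \<Longrightarrow> k_connected E M C \<Longrightarrow> C = B"
    by (rule is_blockE[OF assms(1)]) (rule that)
  have "x \<in> V"
    using assms(2) B(1) unfolding layer_def by blast
  have N: "N = layer_index x"
    using assms(2) B(1) by (intro layer_index_unique[OF _ mem_own_layer[OF \<open>x \<in> V\<close>]]) blast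
  have "B \<subseteq> layer_component x"
    using B(2,1) assms(2) unfolding N by (rule k_connected_subset_layer_component)
  with layer_component_subset[of x, folded N] layer_component_k_connected show ?thesis
    by (intro maximal[symmetric])
qed

lemma block_subset_V:
  assumes "B \<in> blocks"
  shows "B \<subseteq> V"
proof -
  obtain N where "B \<subseteq> layer V E x0 M N"
    using assms unfolding skel_V_def by (elim CollectE is_blockE) (rule that)
  then show ?thesis
    using layer_subset by (rule subset_trans)
qed

lemma block_nonempty: "B \<in> blocks \<Longrightarrow> B \<noteq> {}"
  unfolding skel_V_def by (elim CollectE is_blockE)

lemma to_block_eq_layer_component: "x \<in> V \<Longrightarrow> to_block x = layer_component x"
  unfolding skel_map_def
proof (rule the_equality)
  fix B assume "x \<in> V" "is_block V E x0 M M B \<and> x \<in> B"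
  then show "B = layer_component x"
    using block_eq_layer_component by blast
qed (simp add: layer_component_is_block mem_layer_component)

lemma to_block_in_blocks: "x \<in> V \<Longrightarrow> to_block x \<in> blocks"
  using to_block_eq_layer_component layer_component_is_block unfolding skel_V_def by simp

lemma mem_to_block: "x \<in> V \<Longrightarrow> x \<in> to_block x"
  using to_block_eq_layer_component mem_layer_component by simp

lemma to_block_eq_block:
  assumes "B \<in> blocks" "x \<in> B"
  shows "to_block x = B"
proof -
  have "x \<in> V"
    using assms block_subset_V by blast
  with assms show ?thesis
    unfolding skel_V_def using to_block_eq_layer_component block_eq_layer_component by simp
qed

lemma map_to_block_walk:
  assumes "is_walk E xs"
  shows "is_walk block_edges (map to_block xs)"
proof -
  have "(to_block u, to_block v) \<in> block_edges" if "(u, v) \<in> E" for u v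
    using that edge_in_V to_block_in_blocks mem_to_block unfolding skel_E_def by blast
  with assms show ?thesis
    unfolding is_walk_def successively_map by (auto intro: successively_mono)
qed

lemma gdist_to_block_le:
  assumes "x \<in> V" "y \<in> V"
  shows "reachable block_edges (to_block x) (to_block y)"
    "gdist block_edges (to_block x) (to_block y) \<le> gdist E x y"
proof -
  obtain xs where xs: "is_walk E xs" "hd xs = x" "last xs = y" "length xs = Suc (gdist E x y)"
    using assms by (rule shortest_walk_in_V)
  then have "xs \<noteq> []"
    by auto
  with xs have "hd (map to_block xs) = to_block x"
    "last (map to_block xs) = to_block y"
    by (simp_all add: hd_map last_map)
  with map_to_block_walk[OF xs(1)] xs(4)
  show "reachable block_edges (to_block x) (to_block y)"
    "gdist block_edges (to_block x) (to_block y) \<le> gdist E x y"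
    unfolding reachable_def using gdist_le_walk by fastforce+
qed

lemma block_walk_in_blocks: "is_walk block_edges Bs \<Longrightarrow> hd Bs \<in> blocks \<Longrightarrow> set Bs \<subseteq> blocks"
  using is_walk_restrict_set[of block_edges blocks Bs] unfolding skel_E_def
  by (simp add: Int_absorb2 subset_iff)

context
  fixes D :: nat
  assumes diam: "\<And>B x y. B \<in> blocks \<Longrightarrow> x \<in> B \<Longrightarrow> y \<in> B \<Longrightarrow> gdist E x y \<le> D"
begin

lemma gdist_le_along_block_walk:
  "is_walk block_edges Bs \<Longrightarrow> set Bs \<subseteq> blocks \<Longrightarrow> x \<in> hd Bs \<Longrightarrow> y \<in> last Bs \<Longrightarrow>
    gdist E x y \<le> (D + 1) * (length Bs - 1) + D"
proof (induction Bs arbitrary: x rule: induct_list012)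
  case (2 B)
  then show ?case
    using diam by simp
next
  case (3 B C Cs)
  obtain u v where uv: "u \<in> B" "v \<in> C" "(u, v) \<in> E"
    using "3.prems"(1) unfolding is_walk_def skel_E_def by auto
  have "is_walk block_edges (C # Cs)"
    using "3.prems"(1) unfolding is_walk_def by simp
  with "3.prems" uv(2) have IH: "gdist E v y \<le> (D + 1) * length Cs + D"
    using "3.IH"(2) by simp
  have "last (B # C # Cs) \<in> blocks"
    using "3.prems"(2) last_in_set[of "B # C # Cs"] by blast
  then have "x \<in> V" "y \<in> V" "u \<in> V" "v \<in> V"
    using "3.prems" block_subset_V edge_in_V[OF uv(3)] by auto
  then have "gdist E x y \<le> gdist E x u + gdist E u v + gdist E v y"
    using gdist_triangle_V by (meson add_mono_thms_linordered_semiring(3) le_trans)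
  also have "\<dots> \<le> D + 1 + ((D + 1) * length Cs + D)"
    using diam[of B x u] "3.prems" uv gdist_edge[OF uv(3)] IH by simp
  finally show ?case
    by (simp add: algebra_simps)
qed (simp add: is_walk_def)

lemma gdist_le_gdist_to_block:
  assumes "x \<in> V" "y \<in> V"
  shows "gdist E x y \<le> (D + 1) * gdist block_edges (to_block x) (to_block y) + D"
proof -
  obtain Bs where Bs: "is_walk block_edges Bs" "hd Bs = to_block x" "last Bs = to_block y"
    "length Bs = Suc (gdist block_edges (to_block x) (to_block y))"
    using gdist_to_block_le(1)[OF assms] by (rule shortest_walk_exists)
  then show ?thesis
    using gdist_le_along_block_walk[OF Bs(1) block_walk_in_blocks[OF Bs(1)]] assms
    by (simp add: to_block_in_blocks mem_to_block)
qed

lemma quasi_isometry_to_block_if_diameter_bounded: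
  "quasi_isometry V E blocks block_edges to_block"
proof -
  have upper: "gdist block_edges (to_block x) (to_block y) \<le> (D + 1) * gdist E x y + (D + 1)"
    if "x \<in> V" "y \<in> V" for x y
    using gdist_to_block_le(2)[OF that] by (simp add: algebra_simps)
  have lower: "gdist E x y \<le> (D + 1) * gdist block_edges (to_block x) (to_block y) + (D + 1)"
    if "x \<in> V" "y \<in> V" for x y
    using gdist_le_gdist_to_block[OF that] by simp
  define pick where "pick B = (SOME x. x \<in> B)" for B :: "'a set"
  have pick: "pick B \<in> V" "to_block (pick B) = B" if B: "B \<in> blocks" for B
  proof -
    have "pick B \<in> B"
      using block_nonempty[OF B] unfolding pick_def by (simp add: some_in_eq)
    then show "pick B \<in> V" "to_block (pick B) = B"
      using B block_subset_V to_block_eq_block by auto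
  qed
  have "qi_embedding V E blocks block_edges to_block"
    by (rule qi_embeddingI_nat[where C = "D + 1"]) (use to_block_in_blocks upper lower in blast)+
  moreover have "qi_embedding blocks block_edges V E pick"
  proof (rule qi_embeddingI_nat[where C = "D + 1"])
    show "pick ` blocks \<subseteq> V"
      using pick(1) by blast
    fix B C assume "B \<in> blocks" "C \<in> blocks"
    with pick show "gdist block_edges B C \<le> (D + 1) * gdist E (pick B) (pick C) + (D + 1)"
      "gdist E (pick B) (pick C) \<le> (D + 1) * gdist block_edges B C + (D + 1)"
      using upper lower by metis+
  qed
  ultimately show ?thesis
    unfolding quasi_isometry_def by blast
qed

end

definition outer :: "nat \<Rightarrow> 'a set" where
  "outer a = {v \<in> V. a + M < gdist E v x0}"

definition outer_component :: "nat \<Rightarrow> 'a \<Rightarrow> 'a set" where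
  "outer_component a x = {v. reachable (E \<inter> outer a \<times> outer a) x v}"

lemma outer_component_subset:
  assumes "x \<in> outer a"
  shows "outer_component a x \<subseteq> outer a"
proof
  fix v assume "v \<in> outer_component a x"
  then obtain ws where ws: "is_walk (E \<inter> outer a \<times> outer a) ws" "hd ws = x" "last ws = v"
    unfolding outer_component_def reachable_def by blast
  then have "set ws \<subseteq> outer a" "ws \<noteq> []"
    using is_walk_restrict_set[OF ws(1)] assms by (auto simp: is_walk_def)
  with ws(3) show "v \<in> outer a"
    using last_in_set by blast
qed

lemma near_reachable_in_outer:
  assumes "u \<in> V" "v \<in> V" "near u v" "a + 2 * M < gdist E u x0"
  shows "reachable (E \<inter> outer a \<times> outer a) u v"
proof -
  obtain ws where ws: "is_walk E ws" "hd ws = u" "last ws = v" "length ws = Suc (gdist E u v)"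
    and wsV: "set ws \<subseteq> V"
    using assms(1,2) by (rule shortest_walk_in_V)
  have "set ws \<subseteq> outer a"
  proof
    fix z assume "z \<in> set ws"
    then obtain j where "j < length ws" "ws ! j = z"
      by (auto simp: in_set_conv_nth)
    with shortest_walk_nth(3)[OF ws] ws(4) assms(3) have "gdist E u z \<le> M"
      by fastforce
    moreover have "z \<in> V"
      using \<open>z \<in> set ws\<close> wsV by blast
    ultimately show "z \<in> outer a"
      unfolding outer_def using gdist_triangle_V[OF assms(1) _ root, of z] assms(4) by simp
  qed
  with ws show ?thesis
    unfolding reachable_def using is_walk_restrict by blast
qed

lemma near_chain_in_outer_component:
  assumes "successively near zs" "zs \<noteq> []" "set zs \<subseteq> V"
    and "\<And>z. z \<in> set zs \<Longrightarrow> a + 2 * M < gdist E z x0"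
  shows "set zs \<subseteq> outer_component a (hd zs)"
proof (rule successively_stays_in[OF assms(1,2)])
  show "hd zs \<in> outer_component a (hd zs)"
    unfolding outer_component_def by (simp add: reachable_refl)
  fix u v assume "u \<in> set zs" "v \<in> set zs" "near u v" "u \<in> outer_component a (hd zs)"
  moreover have "reachable (E \<inter> outer a \<times> outer a) u v"
    using \<open>u \<in> set zs\<close> \<open>v \<in> set zs\<close> \<open>near u v\<close> assms(3,4)
    by (intro near_reachable_in_outer) auto
  ultimately show "v \<in> outer_component a (hd zs)"
    unfolding outer_component_def using reachable_trans by fastforce
qed

lemma connected_graph_outer_component:
  assumes "x \<in> outer a"
  defines "Y \<equiv> outer_component a x"
  shows "connected_graph Y (E \<inter> Y \<times> Y)"
proof -
  have "(E \<inter> outer a \<times> outer a) \<inter> Y \<times> Y = E \<inter> Y \<times> Y"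
    using outer_component_subset[OF assms(1)] unfolding Y_def by blast
  moreover have "sym (E \<inter> outer a \<times> outer a)"
    using sym_E unfolding sym_def by blast
  ultimately show ?thesis
    using connected_graph_reachable_class[of "E \<inter> outer a \<times> outer a" x]
    unfolding Y_def outer_component_def by simp
qed

lemma M_disjoint_ball_outer:
  assumes "Y \<subseteq> outer a"
  shows "M_disjoint E M {v \<in> V. gdist E v x0 \<le> a} Y"
  unfolding M_disjoint_def
proof (intro ballI)
  fix p q assume "p \<in> {v \<in> V. gdist E v x0 \<le> a}" "q \<in> Y"
  with assms have "p \<in> V" "q \<in> V" "gdist E p x0 \<le> a" "a + M < gdist E q x0"
    unfolding outer_def by auto
  moreover have "gdist E q x0 \<le> gdist E q p + gdist E p x0"
    using gdist_triangle_V[OF \<open>q \<in> V\<close> \<open>p \<in> V\<close> root] .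
  moreover have "gdist E q p = gdist E p q"
    using gdist_sym_V[OF \<open>q \<in> V\<close> \<open>p \<in> V\<close>] .
  ultimately show "M < gdist E p q"
    by linarith
qed

end

section \<open>Bottlenecks bound the diameter of blocks\<close>

locale fat_bottlenecked_skeleton = rooted_skeleton +
  fixes n :: nat
  assumes fat: "fat_bottlenecked V E M n"
begin

lemma bottleneck_near_outer_component:
  assumes "x \<in> outer a"
  obtains S where "finite S" "card S = n" "S \<subseteq> V"
    "\<And>w r. w \<in> outer_component a x \<Longrightarrow> gdist E w x0 \<le> a + r \<Longrightarrow> \<exists>s\<in>S. gdist E w s < r + M"
proof -
  define X where "X = {v \<in> V. gdist E v x0 \<le> a}"
  define Y where "Y = outer_component a x"
  have "Y \<subseteq> outer a"
    unfolding Y_def using outer_component_subset[OF assms] .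
  then have "subgraph X (E \<inter> X \<times> X) V E" "subgraph Y (E \<inter> Y \<times> Y) V E"
    unfolding subgraph_def X_def outer_def by blast+
  moreover have "connected_graph X (E \<inter> X \<times> X)"
    unfolding X_def using connected_graph_ball[OF root] .
  moreover have "connected_graph Y (E \<inter> Y \<times> Y)"
    unfolding Y_def using connected_graph_outer_component[OF assms] .
  moreover have "M_disjoint E M X Y"
    unfolding X_def using M_disjoint_ball_outer[OF \<open>Y \<subseteq> outer a\<close>] .
  ultimately have "subgraph X (E \<inter> X \<times> X) V E \<and> connected_graph X (E \<inter> X \<times> X) \<and>
      subgraph Y (E \<inter> Y \<times> Y) V E \<and> connected_graph Y (E \<inter> Y \<times> Y) \<and> M_disjoint E M X Y"
    by simp
  then have "\<exists>S. S \<subseteq> V - (X \<union> Y) \<and> finite S \<and> card S = n \<and>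
      (\<forall>P. is_path E P \<and> hd P \<in> X \<and> last P \<in> Y \<longrightarrow> (\<exists>v\<in>set P. v \<in> nbhd V E M S))"
    by (rule fat[unfolded fat_bottlenecked_def, THEN spec, THEN spec, THEN spec, THEN spec, THEN mp])
  then obtain S where S: "S \<subseteq> V - (X \<union> Y)" "finite S" "card S = n"
    and separates: "\<And>P. is_path E P \<Longrightarrow> hd P \<in> X \<Longrightarrow> last P \<in> Y \<Longrightarrow> \<exists>v\<in>set P. v \<in> nbhd V E M S"
    by blast
  have "\<exists>s\<in>S. gdist E w s < r + M" if "w \<in> Y" "gdist E w x0 \<le> a + r" for w r
  proof -
    have "w \<in> V" "a \<le> gdist E w x0"
      using that(1) \<open>Y \<subseteq> outer a\<close> unfolding outer_def by auto
    then have "\<exists>s\<in>S. gdist E w s < gdist E w x0 - a + M"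
      using root S(1) separates that(1) unfolding X_def by (intro close_to_separator) auto
    moreover have "gdist E w x0 - a + M \<le> r + M"
      using that(2) by simp
    ultimately show ?thesis
      by (meson less_le_trans)
  qed
  with S that show ?thesis
    unfolding Y_def by blast
qed

lemma gdist_lt_on_near_chain_in_shell:
  assumes "successively near zs" "zs \<noteq> []" "set zs \<subseteq> V"
    and shell: "\<And>z. z \<in> set zs \<Longrightarrow> a + 2 * M < gdist E z x0 \<and> gdist E z x0 \<le> a + 3 * M"
  shows "gdist E (hd zs) (last zs) < 9 * M * n"
proof (rule ccontr)
  assume "\<not> gdist E (hd zs) (last zs) < 9 * M * n"
  moreover have "0 < M"
    using scale by simp
  ultimately obtain w where w: "\<And>k. k \<le> n \<Longrightarrow> w k \<in> set zs"
    and separated: "\<And>k l. k \<le> n \<Longrightarrow> l \<le> n \<Longrightarrow> k \<noteq> l \<Longrightarrow> 9 * M < gdist E (w k) (w l) + M"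
    using spaced_points_on_chain[OF assms(1-3), of "9 * M" n] by (metis not_less)
  have zs_outer: "set zs \<subseteq> outer_component a (hd zs)"
    using near_chain_in_outer_component[OF assms(1-3)] shell by blast
  have "hd zs \<in> outer a"
    using shell[of "hd zs"] assms(2,3) unfolding outer_def by auto
  then obtain S where S: "finite S" "card S = n" "S \<subseteq> V"
    and near_S: "\<And>w r. w \<in> outer_component a (hd zs) \<Longrightarrow> gdist E w x0 \<le> a + r \<Longrightarrow>
      \<exists>s\<in>S. gdist E w s < r + M"
    by (rule bottleneck_near_outer_component) (rule that)
  have fewer: "card S < card {..n}"
    using S(2) by simp
  have near_w: "\<exists>s\<in>S. gdist E (w k) s < 4 * M" if "k \<in> {..n}" for k
    using near_S[of "w k" "3 * M"] w[of k] that zs_outer shell by fastforce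
  obtain k l s where "k \<in> {..n}" "l \<in> {..n}" "k \<noteq> l" "s \<in> S"
    "gdist E (w k) s < 4 * M" "gdist E (w l) s < 4 * M"
    using pigeonhole_common_witness[where P = "\<lambda>k s. gdist E (w k) s < 4 * M", OF S(1) fewer near_w]
    by blast
  moreover have "w k \<in> V" "w l \<in> V" "s \<in> V"
    using w assms(3) \<open>k \<in> {..n}\<close> \<open>l \<in> {..n}\<close> \<open>s \<in> S\<close> S(3) by auto
  then have "gdist E (w k) (w l) \<le> gdist E (w k) s + gdist E (w l) s"
    using gdist_triangle_V gdist_sym_V by metis
  ultimately show False
    using separated[of k l] by simp
qed

lemma block_diameter_le:
  assumes "B \<in> blocks" "x \<in> B" "y \<in> B"
  shows "gdist E x y \<le> 9 * M * n + 4 * M"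
proof -
  obtain N where B: "B \<subseteq> layer V E x0 M N" "k_connected E M B"
    using assms(1) unfolding skel_V_def by (elim CollectE is_blockE) (rule that)
  then have height: "z \<in> V \<and> N * int M < int (gdist E z x0) \<and> int (gdist E z x0) \<le> (N + 1) * int M"
    if "z \<in> B" for z
    using that unfolding layer_def by blast
  have "x \<in> V" "y \<in> V"
    using height assms(2,3) by auto
  show ?thesis
  proof (cases "N \<le> 1")
    case True
    then have "(N + 1) * int M \<le> 2 * int M"
      by (intro mult_right_mono) auto
    with height[OF assms(2)] height[OF assms(3)] have "gdist E x x0 \<le> 2 * M" "gdist E y x0 \<le> 2 * M"
      by linarith+
    then show ?thesis
      using gdist_triangle_V[OF \<open>x \<in> V\<close> root \<open>y \<in> V\<close>] gdist_sym_V[OF \<open>y \<in> V\<close> root] by linarith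
  next
    case False
    define a where "a = nat ((N - 2) * int M)"
    have "0 \<le> (N - 2) * int M"
      using False by simp
    then have "int a = N * int M - 2 * int M"
      unfolding a_def by (simp add: algebra_simps)
    then have shell: "a + 2 * M < gdist E z x0 \<and> gdist E z x0 \<le> a + 3 * M" if "z \<in> B" for z
      using height[OF that] by (simp add: algebra_simps)
    obtain zs where zs: "zs \<noteq> []" "hd zs = x" "last zs = y" "set zs \<subseteq> B" "successively near zs"
      using B(2) assms(2,3) unfolding k_connected_def by blast
    moreover have "set zs \<subseteq> V"
      using zs(4) height by blast
    ultimately have "gdist E x y < 9 * M * n"
      using gdist_lt_on_near_chain_in_shell[of zs a] shell by blast
    then show ?thesis
      by linarith
  qed
qed

end

theorem theorem1:
  fixes V :: "'a set" and E :: "('a \<times> 'a) set" and M n :: nat and x0 :: 'a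
  assumes "graph V E"
    and "M \<ge> 1"
    and "fat_bottlenecked V E M n"
    and "x0 \<in> V"
  shows "quasi_isometry V E (skel_V V E x0 M M) (skel_E V E x0 M M) (skel_map V E x0 M M)"
proof -
  interpret fat_bottlenecked_skeleton V E x0 M n
    using assms by unfold_locales
  show ?thesis
    using block_diameter_le by (rule quasi_isometry_to_block_if_diameter_bounded)
qed

end
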